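(* Let $f:[0,\infty)\rightarrow[0,\infty)$ be a continuous function which is $3$-convex, nondecreasing and concave. Then for every $\alpha\in(0,1]$ the function $f^{\alpha}$ (i.e. $x\mapsto f(x)^{\alpha}$) is also continuous, $3$-convex, nondecreasing and concave on $[0,\infty)$.
   Context: A function $f$ defined on an interval $I$ is called $3$-convex if for all $x_0<x_1<x_2<x_3$ in $I$ the third-order divided difference $[x_0,x_1,x_2,x_3;f]=\sum_{j=0}^{3}\frac{f(x_j)}{\prod_{k\neq j}(x_j-x_k)}$ is nonnegative. *)

theory Defs
  imports "HOL-Analysis.Analysis"
begin

definition divdiff3 :: "(real \<Rightarrow> real) \<Rightarrow> real \<Rightarrow> real \<Rightarrow> real \<Rightarrow> real \<Rightarrow> real" where
  "divdiff3 f x0 x1 x2 x3 =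
     (let xs = (\<lambda>j::nat. if j = 0 then x0 else if j = 1 then x1 else if j = 2 then x2 else x3)
      in (\<Sum>j\<in>{0..3}. f (xs j) / (\<Prod>k\<in>{0..3} - {j}. (xs j - xs k))))"

definition three_convex_on :: "real set \<Rightarrow> (real \<Rightarrow> real) \<Rightarrow> bool" where
  "three_convex_on I f \<longleftrightarrow>
     (\<forall>x0 x1 x2 x3. x0 \<in> I \<and> x1 \<in> I \<and> x2 \<in> I \<and> x3 \<in> I \<and> x0 < x1 \<and> x1 < x2 \<and> x2 < x3
        \<longrightarrow> divdiff3 f x0 x1 x2 x3 \<ge> 0)"

end

theory Submission
  imports Defs
begin

text \<open>
  On \<open>(0, \<infinity>)\<close> the function \<open>f\<close> either vanishes identically or is positive. In the latter case
  concavity and 3-convexity force \<open>f\<close> to be differentiable: 3-convexity bounds the second divided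
  differences from below near each point, so the left and right difference quotients meet.
  Letting points coalesce in \<open>[x0, x1, x2, x3; f] \<ge> 0\<close> shows that \<open>f'\<close> is convex, and \<open>f'\<close> is
  also nonnegative and nonincreasing. Hence \<open>(f powr \<alpha>)' = \<alpha> f powr (\<alpha> - 1) f'\<close> is a product of
  two nonnegative, nonincreasing, convex functions, so it is convex, and a function with convex
  derivative is 3-convex: subtract the quadratic interpolant at \<open>x0, x1, x2\<close> and apply Rolle's
  theorem twice. Continuity carries 3-convexity to the endpoint \<open>0\<close>; continuity, monotonicity
  and concavity of \<open>f powr \<alpha>\<close> come from those of \<open>t powr \<alpha>\<close>.
\<close>

section \<open>Divided differences\<close>

definition divdiff1 :: "(real \<Rightarrow> real) \<Rightarrow> real \<Rightarrow> real \<Rightarrow> real" where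
  "divdiff1 f a b = (f b - f a) / (b - a)"

definition divdiff2 :: "(real \<Rightarrow> real) \<Rightarrow> real \<Rightarrow> real \<Rightarrow> real \<Rightarrow> real" where
  "divdiff2 f a b c = (divdiff1 f b c - divdiff1 f a b) / (c - a)"

lemma divdiff1_commute: "divdiff1 f a b = divdiff1 f b a"
  unfolding divdiff1_def by (metis minus_diff_eq minus_divide_divide)

lemma divdiff3_eq:
  "divdiff3 f a b c d = f a / ((a-b)*(a-c)*(a-d)) + f b / ((b-a)*(b-c)*(b-d))
     + f c / ((c-a)*(c-b)*(c-d)) + f d / ((d-a)*(d-b)*(d-c))"
proof -
  have "{0..3::nat} = {0,1,2,3}" by auto
  moreover have "{0,Suc 0,2,3::nat} - {0} = {Suc 0,2,3}" "{0,Suc 0,2,3::nat} - {Suc 0} = {0,2,3}"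
     "{0,Suc 0,2,3::nat} - {2} = {0,Suc 0,3}" "{0,Suc 0,2,3::nat} - {3} = {0,Suc 0,2}" by auto
  ultimately show ?thesis unfolding divdiff3_def Let_def by (simp add: mult.assoc)
qed

lemma divdiff3_eq_divdiff2:
  assumes "a \<noteq> b" "a \<noteq> c" "a \<noteq> d" "b \<noteq> c" "b \<noteq> d" "c \<noteq> d"
  shows "divdiff3 f a b c d = (divdiff2 f b c d - divdiff2 f a b c) / (d - a)"
  unfolding divdiff3_eq divdiff2_def divdiff1_def
  by (simp add: divide_simps assms assms[THEN not_sym]) algebra

lemma divdiff2_newton:
  assumes "x0 \<noteq> x1" "x0 \<noteq> x2" "x1 \<noteq> x2"
  shows "g x2 = g x0 + divdiff1 g x0 x1 * (x2 - x0) + divdiff2 g x0 x1 x2 * ((x2 - x0) * (x2 - x1))"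
  unfolding divdiff2_def divdiff1_def
  by (simp add: divide_simps assms assms[THEN not_sym]) algebra

lemma divdiff3_newton:
  assumes "x0 \<noteq> x1" "x0 \<noteq> x2" "x0 \<noteq> x3" "x1 \<noteq> x2" "x1 \<noteq> x3" "x2 \<noteq> x3"
  shows "g x3 = g x0 + divdiff1 g x0 x1 * (x3 - x0) + divdiff2 g x0 x1 x2 * ((x3 - x0) * (x3 - x1))
    + divdiff3 g x0 x1 x2 x3 * ((x3 - x0) * (x3 - x1) * (x3 - x2))"
  unfolding divdiff3_eq divdiff2_def divdiff1_def
  by (simp add: divide_simps assms assms[THEN not_sym]) algebra

lemma three_convex_on_subset: "three_convex_on I f \<Longrightarrow> J \<subseteq> I \<Longrightarrow> three_convex_on J f"
  unfolding three_convex_on_def by blast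

lemma concave_on_divdiff1_le:
  assumes "concave_on I f" "a \<in> I" "c \<in> I" "a < b" "b < c"
  shows "divdiff1 f a c \<le> divdiff1 f a b" "divdiff1 f b c \<le> divdiff1 f a c"
proof -
  have neg: "(f y - f x) / (x - y) = - divdiff1 f x y" for x y
    unfolding divdiff1_def by (metis divide_minus_right minus_diff_eq)
  have "convex_on I (\<lambda>x. - f x)"
    using assms(1) by (simp add: concave_on_def)
  from convex_on_slope_le[OF this assms(2-5)] show
    "divdiff1 f a c \<le> divdiff1 f a b" "divdiff1 f b c \<le> divdiff1 f a c"
    by (simp_all add: neg)
qed

lemma convex_on_if_divdiff2_nonneg:
  assumes "convex I"
    and divdiff2_nonneg: "\<And>x y z. x \<in> I \<Longrightarrow> z \<in> I \<Longrightarrow> x < y \<Longrightarrow> y < z \<Longrightarrow> 0 \<le> divdiff2 h x y z"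
  shows "convex_on I h"
proof (rule convex_on_linorderI[OF _ assms(1)])
  fix t u v :: real
  assume t: "0 < t" "t < 1" and uv: "u \<in> I" "v \<in> I" "u < v"
  define m where "m = (1 - t) *\<^sub>R u + t *\<^sub>R v"
  have mu: "m - u = t * (v - u)" and vm: "v - m = (1 - t) * (v - u)"
    by (simp_all add: m_def algebra_simps)
  have "0 < m - u" "0 < v - m"
    unfolding mu vm using t uv by simp_all
  then have "u < m" "m < v"
    by simp_all
  then have "divdiff1 h u m \<le> divdiff1 h m v"
    using divdiff2_nonneg[OF uv(1,2)] uv(3) by (simp add: divdiff2_def zero_le_divide_iff)
  then have "(h m - h u) * (1 - t) * (v - u) \<le> (h v - h m) * t * (v - u)"
    using t uv(3) unfolding divdiff1_def mu vm by (simp add: divide_simps)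
  then have "(h m - h u) * (1 - t) \<le> (h v - h m) * t"
    using uv(3) by simp
  then show "h m \<le> (1 - t) * h u + t * h v"
    by (simp add: algebra_simps)
qed

section \<open>Compositions and products of convex functions\<close>

lemma concave_on_comp_mono:
  fixes f :: "'a::real_vector \<Rightarrow> real"
  assumes f: "concave_on S f" and \<phi>: "concave_on T \<phi>" "mono_on T \<phi>" and range: "f ` S \<subseteq> T"
  shows "concave_on S (\<lambda>x. \<phi> (f x))"
  unfolding concave_on_def
proof (rule convex_onI)
  show "convex S"
    using f by (rule concave_on_imp_convex)
  fix t :: real and x y
  assume t: "0 < t" "t < 1" and xy: "x \<in> S" "y \<in> S"
  let ?m = "(1 - t) *\<^sub>R x + t *\<^sub>R y"
  have fxy: "f x \<in> T" "f y \<in> T" "f ?m \<in> T"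
    using range xy t convexD[OF concave_on_imp_convex[OF f]] by auto
  have "(1 - t) * \<phi> (f x) + t * \<phi> (f y) \<le> \<phi> ((1 - t) *\<^sub>R f x + t *\<^sub>R f y)"
    using concave_onD[OF \<phi>(1)] t fxy by simp
  also have "\<dots> \<le> \<phi> (f ?m)"
    using concave_onD[OF f] t xy fxy
      convexD[OF concave_on_imp_convex[OF \<phi>(1)], of "f x" "f y" "1 - t" t]
    by (intro mono_onD[OF \<phi>(2)]) auto
  finally show "- \<phi> (f ?m) \<le> (1 - t) * - \<phi> (f x) + t * - \<phi> (f y)"
    by simp
qed

lemma convex_on_comp_antimono_concave:
  fixes f :: "'a::real_vector \<Rightarrow> real"
  assumes "concave_on S f" "convex_on T \<phi>" "antimono_on T \<phi>" "f ` S \<subseteq> T"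
  shows "convex_on S (\<lambda>x. \<phi> (f x))"
proof -
  have "concave_on T (\<lambda>x. - \<phi> x)"
    using assms(2) by (simp add: concave_on_def)
  moreover have "mono_on T (\<lambda>x. - \<phi> x)"
    using assms(3) by (simp add: monotone_on_def)
  ultimately have "concave_on S (\<lambda>x. - \<phi> (f x))"
    by (rule concave_on_comp_mono[OF assms(1) _ _ assms(4)])
  then show ?thesis
    by (simp add: concave_on_def)
qed

lemma convex_on_mul_antimono:
  fixes S :: "real set"
  assumes "convex_on S f" "convex_on S g" "antimono_on S f" "antimono_on S g"
    and fty: "f \<in> S \<rightarrow> {0..}" and gty: "g \<in> S \<rightarrow> {0..}"
  shows "convex_on S (\<lambda>x. f x * g x)"
proof (rule convex_on_linorderI)
  show "convex S"
    using assms(1) by (rule convex_on_imp_convex)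
  fix t x y :: real
  assume t: "0 < t" "t < 1" and xy: "x \<in> S" "y \<in> S" "x < y"
  let ?m = "(1 - t) *\<^sub>R x + t *\<^sub>R y"
  have "?m \<in> S"
    using xy t \<open>convex S\<close> by (intro convexD) auto
  then have "f ?m * g ?m \<le> ((1 - t) * f x + t * f y) * ((1 - t) * g x + t * g y)"
    using convex_onD[OF assms(1), of t x y] convex_onD[OF assms(2), of t x y] t xy fty gty
    by (intro mult_mono) (auto simp: Pi_iff)
  also have "\<dots> = (1 - t) * (f x * g x) + t * (f y * g y) - t * (1 - t) * ((f x - f y) * (g x - g y))"
    by (simp add: algebra_simps)
  also have "\<dots> \<le> (1 - t) * (f x * g x) + t * (f y * g y)"
    using monotone_onD[OF assms(3) xy(1,2)] monotone_onD[OF assms(4) xy(1,2)] t xy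
    by simp
  finally show "f ?m * g ?m \<le> (1 - t) * (f x * g x) + t * (f y * g y)" .
qed

lemma concave_on_powr:
  assumes "0 < a" "a \<le> 1"
  shows "concave_on {0..} (\<lambda>t::real. t powr a)"
proof -
  have concave_pos: "concave_on {0<..} (\<lambda>t::real. t powr a)"
  proof (rule f''_le0_imp_concave)
    fix x :: real
    assume x: "x \<in> {0<..}"
    show "((\<lambda>t. t powr a) has_real_derivative a * x powr (a - 1)) (at x)"
      using x by (auto intro!: has_real_derivative_powr)
    show "((\<lambda>t. a * t powr (a - 1)) has_real_derivative a * ((a - 1) * x powr (a - 1 - 1))) (at x)"
      using x by (auto intro!: derivative_eq_intros has_real_derivative_powr)
    show "a * ((a - 1) * x powr (a - 1 - 1)) \<le> 0"
      using assms by (intro mult_nonneg_nonpos mult_nonpos_nonneg) auto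
  qed simp
  show ?thesis
  proof (rule concave_on_linorderI)
    fix t x y :: real
    assume t: "0 < t" "t < 1" and xy: "x \<in> {0..}" "y \<in> {0..}" "x < y"
    show "(1 - t) * x powr a + t * y powr a \<le> ((1 - t) *\<^sub>R x + t *\<^sub>R y) powr a"
    proof (cases "x = 0")
      case True
      have "t * y powr a \<le> t powr a * y powr a"
        using powr_mono'[of a 1 t] assms t by (intro mult_right_mono) auto
      then show ?thesis
        using True assms t xy by (simp add: powr_mult)
    next
      case False
      then show ?thesis
        using concave_onD[OF concave_pos, of t x y] t xy by simp
    qed
  qed simp
qed

lemma convex_on_powr_nonpos:
  assumes "a \<le> 0"
  shows "convex_on {0<..} (\<lambda>t::real. t powr a)"
proof (rule f''_ge0_imp_convex)
  fix x :: real
  assume x: "x \<in> {0<..}"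
  show "((\<lambda>t. t powr a) has_real_derivative a * x powr (a - 1)) (at x)"
    using x by (auto intro!: has_real_derivative_powr)
  show "((\<lambda>t. a * t powr (a - 1)) has_real_derivative a * ((a - 1) * x powr (a - 1 - 1))) (at x)"
    using x by (auto intro!: derivative_eq_intros has_real_derivative_powr)
  show "0 \<le> a * ((a - 1) * x powr (a - 1 - 1))"
    using assms by (intro mult_nonpos_nonpos mult_nonpos_nonneg) auto
qed simp

section \<open>Derivatives of monotone, concave and 3-convex functions\<close>

lemma mono_on_deriv_nonneg:
  fixes f :: "real \<Rightarrow> real"
  assumes mono: "mono_on I f" and x: "x \<in> interior I" and der: "(f has_real_derivative D) (at x)"
  shows "0 \<le> D"
proof (rule ccontr)
  assume "\<not> 0 \<le> D"
  then obtain d where d: "0 < d" "\<And>h. 0 < h \<Longrightarrow> h < d \<Longrightarrow> f (x + h) < f x"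
    using DERIV_neg_dec_right[OF der] by force
  obtain e where e: "0 < e" "ball x e \<subseteq> I"
    using x mem_interior by blast
  define h where "h = min d e / 2"
  have "x \<in> I" "x + h \<in> I"
    using e d by (auto simp: h_def dist_real_def)
  then have "f x \<le> f (x + h)"
    using e d by (intro mono_onD[OF mono]) (auto simp: h_def)
  moreover have "f (x + h) < f x"
    using d e by (intro d(2)) (auto simp: h_def)
  ultimately show False
    by simp
qed

lemma concave_on_deriv_antimono:
  fixes f :: "real \<Rightarrow> real"
  assumes conc: "concave_on I f" and "open I"
    and der: "\<And>x. x \<in> I \<Longrightarrow> (f has_real_derivative f' x) (at x)"
  shows "antimono_on I f'"
proof (rule monotone_onI)
  have tangent: "f v - f u \<le> f' u * (v - u)" if "u \<in> I" "v \<in> I" for u v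
  proof -
    have "- f' u * (v - u) \<le> - f v - - f u"
    proof (rule convex_on_imp_above_tangent)
      show "convex_on I (\<lambda>x. - f x)"
        using conc by (simp add: concave_on_def)
      show "connected I"
        using conc by (simp add: concave_on_imp_convex convex_connected)
      show "((\<lambda>x. - f x) has_real_derivative - f' u) (at u within I)"
        using DERIV_minus[OF der[OF that(1)]] by (rule has_field_derivative_at_within)
    qed (use that \<open>open I\<close> in \<open>simp_all add: interior_open\<close>)
    then show ?thesis
      by simp
  qed
  fix x y
  assume "x \<in> I" "y \<in> I" "x \<le> y"
  then have "(f' y - f' x) * (y - x) \<le> 0"
    using tangent[of x y] tangent[of y x] by (simp add: algebra_simps)
  then show "f' y \<le> f' x"
    using \<open>x \<le> y\<close> by (cases "x = y") (auto simp: mult_le_0_iff)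
qed

lemma values_close_if_opposite_sides_close:
  fixes q :: "real \<Rightarrow> real"
  assumes opposite: "\<And>a b. x - \<delta> < a \<Longrightarrow> a < x \<Longrightarrow> x < b \<Longrightarrow> b < x + \<delta> \<Longrightarrow> \<bar>q a - q b\<bar> \<le> C"
    and "0 < \<delta>" and y: "y \<noteq> x" "\<bar>y - x\<bar> < \<delta>" and y': "y' \<noteq> x" "\<bar>y' - x\<bar> < \<delta>"
  shows "\<bar>q y - q y'\<bar> \<le> 4 * C"
proof -
  define w where "w = x + \<delta> / 2"
  have near_w: "\<bar>q u - q w\<bar> \<le> 2 * C" if "u \<noteq> x" "\<bar>u - x\<bar> < \<delta>" for u
  proof (cases "u < x")
    case True
    then show ?thesis
      using opposite[of u w] that \<open>0 < \<delta>\<close> by (auto simp: w_def)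
  next
    case False
    then have "\<bar>q (x - \<delta> / 2) - q u\<bar> \<le> C" "\<bar>q (x - \<delta> / 2) - q w\<bar> \<le> C"
      using opposite that \<open>0 < \<delta>\<close> by (auto simp: w_def)
    then show ?thesis
      by linarith
  qed
  show ?thesis
    using near_w[OF y] near_w[OF y'] by linarith
qed

lemma ex_tendsto_at_if_opposite_sides_close:
  fixes q :: "real \<Rightarrow> real"
  assumes "0 < r"
    and close: "\<And>a b. x - r < a \<Longrightarrow> a < x \<Longrightarrow> x < b \<Longrightarrow> b < x + r \<Longrightarrow> \<bar>q a - q b\<bar> \<le> M * (b - a)"
  shows "\<exists>L. (q \<longlongrightarrow> L) (at x)"
proof -
  have "cauchy_filter (filtermap q (at x))"
    unfolding cauchy_filter_metric_filtermap
  proof (intro allI impI)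
    fix e :: real
    assume "0 < e"
    define \<delta> where "\<delta> = min r (e / (8 * \<bar>M\<bar> + 1))"
    have \<delta>: "0 < \<delta>" "\<delta> \<le> r"
      using \<open>0 < e\<close> \<open>0 < r\<close> by (auto simp: \<delta>_def)
    have "\<delta> \<le> e / (8 * \<bar>M\<bar> + 1)"
      by (simp add: \<delta>_def)
    then have "8 * \<bar>M\<bar> * \<delta> + \<delta> \<le> e"
      by (simp add: pos_le_divide_eq add_pos_nonneg distrib_left mult.commute)
    then have \<delta>_small: "8 * \<bar>M\<bar> * \<delta> < e"
      using \<delta>(1) by linarith
    have opposite: "\<bar>q a - q b\<bar> \<le> 2 * \<bar>M\<bar> * \<delta>"
      if "x - \<delta> < a" "a < x" "x < b" "b < x + \<delta>" for a b
    proof -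
      have "\<bar>q a - q b\<bar> \<le> M * (b - a)"
        using close that \<delta> by simp
      also have "\<dots> \<le> \<bar>M\<bar> * (2 * \<delta>)"
        using that by (intro mult_mono) auto
      finally show ?thesis
        by simp
    qed
    show "\<exists>P. eventually P (at x) \<and> (\<forall>y y'. P y \<and> P y' \<longrightarrow> dist (q y) (q y') < e)"
    proof (intro exI conjI allI impI)
      show "eventually (\<lambda>y. y \<noteq> x \<and> \<bar>y - x\<bar> < \<delta>) (at x)"
        unfolding eventually_at using \<delta> by (auto simp: dist_real_def)
      fix y y'
      assume "(y \<noteq> x \<and> \<bar>y - x\<bar> < \<delta>) \<and> y' \<noteq> x \<and> \<bar>y' - x\<bar> < \<delta>"
      then have "\<bar>q y - q y'\<bar> \<le> 4 * (2 * \<bar>M\<bar> * \<delta>)"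
        using opposite \<delta>(1) by (intro values_close_if_opposite_sides_close[of x \<delta> q]) auto
      then show "dist (q y) (q y') < e"
        using \<delta>_small by (simp add: dist_real_def)
    qed
  qed
  then obtain L where "filtermap q (at x) \<le> nhds L"
    using convergent_filter_iff_cauchy convergent_filter_iff by blast
  then show ?thesis
    by (auto simp: filterlim_def)
qed

lemma real_differentiable_if_slopes_close:
  fixes f :: "real \<Rightarrow> real"
  assumes "0 < r"
    and close: "\<And>a b. x - r < a \<Longrightarrow> a < x \<Longrightarrow> x < b \<Longrightarrow> b < x + r \<Longrightarrow>
      \<bar>divdiff1 f a x - divdiff1 f x b\<bar> \<le> M * (b - a)"
  shows "f differentiable (at x)"
proof -
  define q where "q = (\<lambda>y. (f y - f x) / (y - x))"
  have "\<bar>q a - q b\<bar> \<le> M * (b - a)" if "x - r < a" "a < x" "x < b" "b < x + r" for a b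
    using close[OF that] divdiff1_commute[of f a x] by (simp add: q_def divdiff1_def)
  then obtain L where "(q \<longlongrightarrow> L) (at x)"
    using ex_tendsto_at_if_opposite_sides_close[OF \<open>0 < r\<close>] by blast
  then have "(f has_real_derivative L) (at x)"
    by (simp add: has_field_derivative_iff q_def)
  then show ?thesis
    using real_differentiable_def by blast
qed

lemma divdiff2_lower_bound_if_concave_three_convex:
  fixes f :: "real \<Rightarrow> real"
  assumes conc: "concave_on I f" and conv3: "three_convex_on I f" and sub: "{p..x + r} \<subseteq> I"
    and pts: "p < x - r" "x - r < a" "a < x" "x < b" "b < x + r"
  shows "(divdiff1 f x (x + r) - divdiff1 f p (x - r)) / (x - p) \<le> divdiff2 f a x b"
proof -
  have I: "p \<in> I" "x - r \<in> I" "a \<in> I" "x \<in> I" "b \<in> I" "x + r \<in> I"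
    using sub pts by (auto simp: subset_iff)
  have "0 \<le> divdiff3 f p a x b"
    using conv3 I pts unfolding three_convex_on_def by auto
  then have "divdiff2 f p a x \<le> divdiff2 f a x b"
    using divdiff3_eq_divdiff2[of p a x b f] pts by (simp add: zero_le_divide_iff)
  moreover have "divdiff1 f x (x + r) \<le> divdiff1 f a x"
    using concave_on_divdiff1_le[OF conc I(3,6) pts(3)] pts by linarith
  moreover have "divdiff1 f p a \<le> divdiff1 f p (x - r)"
    using concave_on_divdiff1_le(1)[OF conc I(1,3) pts(1,2)] .
  ultimately show ?thesis
    using pts unfolding divdiff2_def[of f p a x] by (smt (verit) divide_right_mono)
qed

text \<open>By concavity the left slope dominates the right one; the lower bound on second divided
  differences limits the gap to \<open>O(b - a)\<close>.\<close>
lemma differentiable_if_concave_three_convex: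
  fixes f :: "real \<Rightarrow> real"
  assumes conc: "concave_on I f" and conv3: "three_convex_on I f" and x: "x \<in> interior I"
  shows "f differentiable (at x)"
proof -
  obtain e where e: "0 < e" "ball x e \<subseteq> I"
    using x mem_interior by blast
  define r where "r = e / 3"
  define p where "p = x - 2 * r"
  define M where "M = (divdiff1 f p (x - r) - divdiff1 f x (x + r)) / (x - p)"
  have r: "0 < r" "p < x - r"
    using e(1) by (simp_all add: r_def p_def)
  have sub: "{p..x + r} \<subseteq> I"
  proof
    fix y
    assume "y \<in> {p..x + r}"
    then have "y \<in> ball x e"
      using e(1) by (auto simp: p_def r_def dist_real_def)
    then show "y \<in> I"
      using e(2) by blast
  qed
  show ?thesis
  proof (rule real_differentiable_if_slopes_close[OF r(1)])
    fix a b
    assume ab: "x - r < a" "a < x" "x < b" "b < x + r"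
    then have "a \<in> I" "b \<in> I"
      using sub r by (auto simp: subset_iff)
    then have right_le_left: "divdiff1 f x b \<le> divdiff1 f a x"
      using concave_on_divdiff1_le[OF conc _ _ ab(2,3)] by fastforce
    have "- M \<le> (divdiff1 f x b - divdiff1 f a x) / (b - a)"
      using divdiff2_lower_bound_if_concave_three_convex[OF conc conv3 sub r(2) ab]
      by (simp add: M_def divdiff2_def minus_divide_left)
    then have "- M * (b - a) \<le> divdiff1 f x b - divdiff1 f a x"
      using ab by (simp add: le_divide_eq)
    then show "\<bar>divdiff1 f a x - divdiff1 f x b\<bar> \<le> M * (b - a)"
      using right_le_left by (simp add: algebra_simps)
  qed
qed

section \<open>3-convexity through the derivative\<close>

text \<open>The three quantities are the confluent differences \<open>[x, x, y, z]\<close>, \<open>[x, y, y, z]\<close> and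
  \<open>[x, y, z, z]\<close>, the limits of \<open>[x, t, y, z]\<close> as \<open>t \<down> x\<close> and of \<open>[x, y, t, z]\<close> as \<open>t \<down> y\<close>
  and \<open>t \<up> z\<close>. Their sum is \<open>[x, y, z; f']\<close>.\<close>
lemma three_convex_on_confluent_nonneg:
  fixes f :: "real \<Rightarrow> real"
  assumes conv3: "three_convex_on I f" and "convex I"
    and der: "\<And>x. x \<in> I \<Longrightarrow> (f has_real_derivative f' x) (at x)"
    and xyz: "x \<in> I" "z \<in> I" "x < y" "y < z"
  shows "0 \<le> (divdiff2 f x y z - (divdiff1 f x y - f' x) / (y - x)) / (z - x)" (is "0 \<le> ?V1")
    and "0 \<le> ((divdiff1 f y z - f' y) / (z - y) - (f' y - divdiff1 f x y) / (y - x)) / (z - x)"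
      (is "0 \<le> ?V2")
    and "0 \<le> ((f' z - divdiff1 f y z) / (z - y) - divdiff2 f x y z) / (z - x)" (is "0 \<le> ?V3")
proof -
  have sub: "{x..z} \<subseteq> I"
    using atMostAtLeast_subset_convex[OF \<open>convex I\<close> xyz(1,2)] xyz by simp
  have cont: "(f \<longlongrightarrow> f p) (at p)" if "p \<in> {x..z}" for p
    using DERIV_isCont[OF der] sub that by (auto simp: isCont_def)
  have slope: "((\<lambda>t. divdiff1 f p t) \<longlongrightarrow> f' p) (at p)" "((\<lambda>t. divdiff1 f t p) \<longlongrightarrow> f' p) (at p)"
    if "p \<in> {x..z}" for p
    using der[of p] sub that divdiff1_commute[of f p]
    by (auto simp: has_field_derivative_iff divdiff1_def)
  have dd3: "0 \<le> (divdiff2 f b c d - divdiff2 f a b c) / (d - a)"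
    if "x \<le> a" "a < b" "b < c" "c < d" "d \<le> z" for a b c d
  proof -
    have "0 \<le> divdiff3 f a b c d"
      using conv3 sub that unfolding three_convex_on_def by (simp add: subset_iff)
    then show ?thesis
      using divdiff3_eq_divdiff2[of a b c d f] that by simp
  qed
  show "0 \<le> ?V1"
  proof (rule tendsto_lowerbound)
    have "((\<lambda>t. (divdiff2 f t y z - divdiff2 f x t y) / (z - x)) \<longlongrightarrow> ?V1) (at x)"
      unfolding divdiff2_def using xyz
      by (intro tendsto_intros slope cont) (auto simp: divdiff1_def intro!: tendsto_divide tendsto_diff cont)
    then show "((\<lambda>t. (divdiff2 f t y z - divdiff2 f x t y) / (z - x)) \<longlongrightarrow> ?V1) (at_right x)"
      by (simp add: filterlim_at_split)
    show "\<forall>\<^sub>F t in at_right x. 0 \<le> (divdiff2 f t y z - divdiff2 f x t y) / (z - x)"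
      unfolding eventually_at_right_field using xyz dd3 by (intro exI[of _ y]) auto
  qed simp
  show "0 \<le> ?V2"
  proof (rule tendsto_lowerbound)
    have "((\<lambda>t. (divdiff2 f y t z - divdiff2 f x y t) / (z - x)) \<longlongrightarrow> ?V2) (at y)"
      unfolding divdiff2_def using xyz
      by (intro tendsto_intros slope cont) (auto simp: divdiff1_def intro!: tendsto_divide tendsto_diff cont)
    then show "((\<lambda>t. (divdiff2 f y t z - divdiff2 f x y t) / (z - x)) \<longlongrightarrow> ?V2) (at_right y)"
      by (simp add: filterlim_at_split)
    show "\<forall>\<^sub>F t in at_right y. 0 \<le> (divdiff2 f y t z - divdiff2 f x y t) / (z - x)"
      unfolding eventually_at_right_field using xyz dd3 by (intro exI[of _ z]) auto
  qed simp
  show "0 \<le> ?V3"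
  proof (rule tendsto_lowerbound)
    have "((\<lambda>t. (divdiff2 f y t z - divdiff2 f x y t) / (z - x)) \<longlongrightarrow> ?V3) (at z)"
      unfolding divdiff2_def using xyz
      by (intro tendsto_intros slope cont) (auto simp: divdiff1_def intro!: tendsto_divide tendsto_diff cont)
    then show "((\<lambda>t. (divdiff2 f y t z - divdiff2 f x y t) / (z - x)) \<longlongrightarrow> ?V3) (at_left z)"
      by (simp add: filterlim_at_split)
    show "\<forall>\<^sub>F t in at_left z. 0 \<le> (divdiff2 f y t z - divdiff2 f x y t) / (z - x)"
      unfolding eventually_at_left_field using xyz dd3 by (intro exI[of _ y]) auto
  qed simp
qed

lemma convex_on_deriv_if_three_convex:
  fixes f :: "real \<Rightarrow> real"
  assumes conv3: "three_convex_on I f" and "convex I"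
    and der: "\<And>x. x \<in> I \<Longrightarrow> (f has_real_derivative f' x) (at x)"
  shows "convex_on I f'"
proof (rule convex_on_if_divdiff2_nonneg[OF \<open>convex I\<close>])
  fix x y z
  assume "x \<in> I" "z \<in> I" "x < y" "y < z"
  note confluent = three_convex_on_confluent_nonneg[OF conv3 \<open>convex I\<close> der this]
  have "divdiff2 f' x y z =
      (divdiff2 f x y z - (divdiff1 f x y - f' x) / (y - x)) / (z - x)
    + ((divdiff1 f y z - f' y) / (z - y) - (f' y - divdiff1 f x y) / (y - x)) / (z - x)
    + ((f' z - divdiff1 f y z) / (z - y) - divdiff2 f x y z) / (z - x)"
    unfolding divdiff2_def[of f'] divdiff1_def[of f']
    by (simp add: diff_divide_distrib add_divide_distrib)
  then show "0 \<le> divdiff2 f' x y z"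
    using confluent by linarith
qed

lemma nonneg_if_convex_deriv_three_zeros:
  fixes e e' :: "real \<Rightarrow> real"
  assumes x: "x0 < x1" "x1 < x2" "x2 \<le> x3"
    and zeros: "e x0 = 0" "e x1 = 0" "e x2 = 0"
    and der: "\<And>t. t \<in> {x0..x3} \<Longrightarrow> (e has_real_derivative e' t) (at t)"
    and conv: "convex_on {x0..x3} e'"
  shows "0 \<le> e x3"
proof -
  have rolle: "\<exists>z. a < z \<and> z < b \<and> e' z = 0" if "x0 \<le> a" "a < b" "b \<le> x3" "e a = e b" for a b
  proof -
    have "continuous_on {a..b} e"
      using that by (intro continuous_at_imp_continuous_on ballI DERIV_isCont[OF der]) auto
    moreover have "e differentiable (at t)" if "a < t" "t < b" for t
      unfolding real_differentiable_def using der[of t] \<open>x0 \<le> a\<close> \<open>b \<le> x3\<close> that by force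
    ultimately obtain z where "a < z" "z < b" "(e has_real_derivative 0) (at z)"
      using Rolle[OF \<open>a < b\<close> \<open>e a = e b\<close>] by blast
    moreover have "z \<in> {x0..x3}"
      using \<open>a < z\<close> \<open>z < b\<close> that by simp
    ultimately show ?thesis
      using DERIV_unique der by blast
  qed
  obtain z1 where z1: "x0 < z1" "z1 < x1" "e' z1 = 0"
    using rolle[of x0 x1] x zeros by auto
  obtain z2 where z2: "x1 < z2" "z2 < x2" "e' z2 = 0"
    using rolle[of x1 x2] x zeros by auto
  have e'_nonneg: "0 \<le> e' t" if "x2 \<le> t" "t \<le> x3" for t
  proof -
    have "(e' z1 - e' z2) / (z1 - z2) \<le> (e' z1 - e' t) / (z1 - t)"
      using convex_on_slope_le(1)[OF conv, of z1 t z2] z1 z2 x that by simp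
    then have "e' t / (z1 - t) \<le> 0"
      using z1 z2 by simp
    then show ?thesis
      using z1 z2 x that by (simp add: divide_le_0_iff)
  qed
  have "e x2 \<le> e x3"
  proof (rule DERIV_nonneg_imp_nondecreasing[OF x(3)])
    fix t
    assume "x2 \<le> t" "t \<le> x3"
    then show "\<exists>y. (e has_real_derivative y) (at t) \<and> 0 \<le> y"
      using der[of t] e'_nonneg[of t] x by auto
  qed
  then show ?thesis
    using zeros by simp
qed

lemma three_convex_on_if_convex_on_deriv:
  fixes g g' :: "real \<Rightarrow> real"
  assumes "convex I"
    and der: "\<And>x. x \<in> I \<Longrightarrow> (g has_real_derivative g' x) (at x)"
    and conv: "convex_on I g'"
  shows "three_convex_on I g"
  unfolding three_convex_on_def
proof (intro allI impI, elim conjE)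
  fix x0 x1 x2 x3
  assume "x0 \<in> I" "x1 \<in> I" "x2 \<in> I" "x3 \<in> I" and x: "x0 < x1" "x1 < x2" "x2 < x3"
  then have sub: "{x0..x3} \<subseteq> I"
    by (intro atMostAtLeast_subset_convex[OF \<open>convex I\<close>]) auto
  define c1 where "c1 = divdiff1 g x0 x1"
  define c2 where "c2 = divdiff2 g x0 x1 x2"
  \<comment> \<open>\<open>g\<close> minus its Newton interpolant at \<open>x0, x1, x2\<close>\<close>
  define e where "e t = g t - (g x0 + c1 * (t - x0) + c2 * ((t - x0) * (t - x1)))" for t
  have "0 \<le> e x3"
  proof (rule nonneg_if_convex_deriv_three_zeros[OF x(1,2) less_imp_le[OF x(3)]])
    show "e x0 = 0" "e x1 = 0"
      using x by (simp_all add: e_def c1_def divdiff1_def)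
    show "e x2 = 0"
      using divdiff2_newton[of x0 x1 x2 g] x by (simp add: e_def c1_def c2_def)
    show "(e has_real_derivative g' t - (c1 + c2 * (2 * t - x0 - x1))) (at t)" if "t \<in> {x0..x3}" for t
      unfolding e_def using der that sub by (auto intro!: derivative_eq_intros simp: algebra_simps)
    have "concave_on {x0..x3} (\<lambda>t. c1 + c2 * (2 * t - x0 - x1))"
      by (rule concave_on_linorderI) (simp_all add: algebra_simps)
    then show "convex_on {x0..x3} (\<lambda>t. g' t - (c1 + c2 * (2 * t - x0 - x1)))"
      using convex_on_subset[OF conv sub] by (intro convex_on_diff) simp_all
  qed
  moreover have "e x3 = divdiff3 g x0 x1 x2 x3 * ((x3 - x0) * (x3 - x1) * (x3 - x2))"
    using divdiff3_newton[of x0 x1 x2 x3 g] x by (simp add: e_def c1_def c2_def)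
  moreover have "0 < (x3 - x0) * (x3 - x1) * (x3 - x2)"
    using x by simp
  ultimately show "0 \<le> divdiff3 g x0 x1 x2 x3"
    by (simp add: zero_le_mult_iff)
qed

lemma three_convex_on_atLeast_if_continuous:
  assumes cont: "continuous_on {a..} g" and conv3: "three_convex_on {a<..} g"
  shows "three_convex_on {a..} g"
  unfolding three_convex_on_def
proof (intro allI impI, elim conjE)
  fix x0 x1 x2 x3 :: real
  assume "x0 \<in> {a..}" "x1 \<in> {a..}" "x2 \<in> {a..}" "x3 \<in> {a..}" and x: "x0 < x1" "x1 < x2" "x2 < x3"
  show "0 \<le> divdiff3 g x0 x1 x2 x3"
  proof (cases "x0 = a")
    case False
    then show ?thesis
      using conv3 \<open>x0 \<in> {a..}\<close> x unfolding three_convex_on_def by auto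
  next
    case True
    have "(g \<longlongrightarrow> g a) (at_right a)"
      using cont unfolding continuous_on_def
      by (intro tendsto_mono[OF at_le[of "{a<..}" "{a..}"]]) auto
    then have "((\<lambda>t. divdiff3 g t x1 x2 x3) \<longlongrightarrow> divdiff3 g x0 x1 x2 x3) (at_right a)"
      unfolding divdiff3_eq True using x True
      by (intro tendsto_intros) auto
    moreover have "\<forall>\<^sub>F t in at_right a. 0 \<le> divdiff3 g t x1 x2 x3"
      unfolding eventually_at_right_field using conv3 x True
      unfolding three_convex_on_def by (intro exI[of _ x1]) auto
    ultimately show ?thesis
      by (rule tendsto_lowerbound) simp
  qed
qed

section \<open>Powers of concave 3-convex functions\<close>

lemma concave_on_nonneg_vanishing:
  fixes f :: "real \<Rightarrow> real"
  assumes conc: "concave_on {0..} f" and nonneg: "\<And>x. 0 \<le> x \<Longrightarrow> 0 \<le> f x"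
    and z: "0 < z" "f z = 0" and y: "0 \<le> y"
  shows "f y = 0"
proof (cases "y \<le> z")
  case True
  have "(1 - 1 / 2) * f y + 1 / 2 * f (2 * z - y) \<le> f ((1 - 1 / 2) *\<^sub>R y + (1 / 2) *\<^sub>R (2 * z - y))"
    using True y by (intro concave_onD[OF conc]) auto
  then have "f y \<le> 0"
    using z nonneg[of "2 * z - y"] True by (simp add: algebra_simps)
  then show ?thesis
    using nonneg[OF y] by simp
next
  case False
  have "(1 - z / y) * f 0 + z / y * f y \<le> f ((1 - z / y) *\<^sub>R 0 + (z / y) *\<^sub>R y)"
    using False z by (intro concave_onD[OF conc]) auto
  moreover have "0 \<le> (1 - z / y) * f 0"
    using False z nonneg[of 0] by simp
  ultimately have "z / y * f y \<le> 0"
    using False z by simp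
  then show ?thesis
    using False z nonneg[OF y] by (simp add: divide_le_0_iff mult_le_0_iff)
qed

lemma three_convex_on_powr:
  fixes f :: "real \<Rightarrow> real"
  assumes "open I" and pos: "\<And>x. x \<in> I \<Longrightarrow> 0 < f x"
    and conc: "concave_on I f" and mono: "mono_on I f" and conv3: "three_convex_on I f"
    and \<alpha>: "0 \<le> \<alpha>" "\<alpha> \<le> 1"
  shows "three_convex_on I (\<lambda>x. f x powr \<alpha>)"
proof -
  have "convex I"
    using conc by (rule concave_on_imp_convex)
  define f' where "f' = deriv f"
  have der: "(f has_real_derivative f' x) (at x)" if "x \<in> I" for x
    using differentiable_if_concave_three_convex[OF conc conv3] that \<open>open I\<close>
    by (simp add: f'_def interior_open DERIV_deriv_iff_real_differentiable)
  have f'_convex: "convex_on I f'"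
    using conv3 \<open>convex I\<close> der by (rule convex_on_deriv_if_three_convex)
  have f'_antimono: "antimono_on I f'"
    using conc \<open>open I\<close> der by (rule concave_on_deriv_antimono)
  have f'_nonneg: "f' \<in> I \<rightarrow> {0..}"
    using mono_on_deriv_nonneg[OF mono _ der] \<open>open I\<close> by (auto simp: interior_open)
  define h where "h x = \<alpha> * f x powr (\<alpha> - 1)" for x
  have "antimono_on {0<..} (\<lambda>t::real. t powr (\<alpha> - 1))"
    unfolding monotone_on_def using \<alpha> by (auto intro: powr_mono2')
  moreover have "convex_on {0<..} (\<lambda>t::real. t powr (\<alpha> - 1))"
    using \<alpha> by (intro convex_on_powr_nonpos) simp
  moreover have "f ` I \<subseteq> {0<..}"
    using pos by auto
  ultimately have "convex_on I (\<lambda>x. f x powr (\<alpha> - 1))"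
    using convex_on_comp_antimono_concave[OF conc] by blast
  then have h_convex: "convex_on I h"
    unfolding h_def by (rule convex_on_cmul[OF \<alpha>(1)])
  have h_antimono: "antimono_on I h"
  proof (rule monotone_onI)
    fix x y
    assume "x \<in> I" "y \<in> I" "x \<le> y"
    then have "f y powr (\<alpha> - 1) \<le> f x powr (\<alpha> - 1)"
      using \<alpha> pos mono_onD[OF mono] by (intro powr_mono2') auto
    then show "h y \<le> h x"
      using \<alpha> by (simp add: h_def mult_left_mono)
  qed
  have h_nonneg: "h \<in> I \<rightarrow> {0..}"
    using \<alpha> by (simp add: h_def)
  have g'_convex: "convex_on I (\<lambda>x. h x * f' x)"
    using h_convex f'_convex h_antimono f'_antimono h_nonneg f'_nonneg by (rule convex_on_mul_antimono)
  have g_der: "((\<lambda>x. f x powr \<alpha>) has_real_derivative h x * f' x) (at x)" if "x \<in> I" for x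
    using DERIV_fun_powr[OF der[OF that] pos[OF that], of \<alpha>] by (simp add: h_def)
  show ?thesis
    using \<open>convex I\<close> g_der g'_convex by (rule three_convex_on_if_convex_on_deriv)
qed

lemma three_convex_on_atLeast0_powr:
  fixes f :: "real \<Rightarrow> real"
  assumes nonneg: "\<And>x. 0 \<le> x \<Longrightarrow> 0 \<le> f x" and cont: "continuous_on {0..} (\<lambda>x. f x powr \<alpha>)"
    and conc: "concave_on {0..} f" and mono: "mono_on {0..} f" and conv3: "three_convex_on {0..} f"
    and alpha: "0 \<le> \<alpha>" "\<alpha> \<le> 1"
  shows "three_convex_on {0..} (\<lambda>x. f x powr \<alpha>)"
proof (cases "\<exists>z>0. f z = 0")
  case True
  then have "f x = 0" if "0 \<le> x" for x
    using concave_on_nonneg_vanishing[OF conc nonneg _ _ that] by blast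
  then show ?thesis
    by (simp add: three_convex_on_def divdiff3_eq)
next
  case False
  have "three_convex_on {0<..} (\<lambda>x. f x powr \<alpha>)"
  proof (rule three_convex_on_powr)
    show "0 < f x" if "x \<in> {0<..}" for x
      using False nonneg[of x] that by (auto simp: less_le)
    show "concave_on {0<..} f"
      using conc unfolding concave_on_def by (rule convex_on_subset) auto
    show "mono_on {0<..} f"
      by (rule mono_on_subset[OF mono]) auto
    show "three_convex_on {0<..} f"
      by (rule three_convex_on_subset[OF conv3]) auto
  qed (use alpha in auto)
  with cont show ?thesis
    by (rule three_convex_on_atLeast_if_continuous)
qed

theorem corollary1:
  fixes f :: "real \<Rightarrow> real" and \<alpha> :: real
  assumes nonneg: "\<forall>x\<ge>0. f x \<ge> 0"
    and cont: "continuous_on {0..} f"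
    and conv3: "three_convex_on {0..} f"
    and mono: "mono_on {0..} f"
    and conc: "concave_on {0..} f"
    and alpha: "0 < \<alpha>" "\<alpha> \<le> 1"
  shows "continuous_on {0..} (\<lambda>x. f x powr \<alpha>)
       \<and> three_convex_on {0..} (\<lambda>x. f x powr \<alpha>)
       \<and> mono_on {0..} (\<lambda>x. f x powr \<alpha>)
       \<and> concave_on {0..} (\<lambda>x. f x powr \<alpha>)"
proof -
  have range: "f ` {0..} \<subseteq> {0..}"
    using nonneg by auto
  have powr_mono: "mono_on {0..} (\<lambda>t::real. t powr \<alpha>)"
    using alpha by (intro mono_onI powr_mono2) auto
  have cont_powr: "continuous_on {0..} (\<lambda>x. f x powr \<alpha>)"
    using nonneg alpha by (intro continuous_on_powr' cont continuous_on_const) auto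
  moreover have "three_convex_on {0..} (\<lambda>x. f x powr \<alpha>)"
    using nonneg cont_powr conc mono conv3 alpha by (intro three_convex_on_atLeast0_powr) auto
  moreover have "mono_on {0..} (\<lambda>x. f x powr \<alpha>)"
    using monotone_on_o[OF powr_mono mono range] by (simp add: o_def)
  moreover have "concave_on {0..} (\<lambda>x. f x powr \<alpha>)"
    using conc concave_on_powr[OF alpha] powr_mono range by (rule concave_on_comp_mono)
  ultimately show ?thesis
    by blast
qed

end
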